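(* Let $X_0:=0$, let $X_1,X_2,\dots$ be independent uniform random variables on $(0,1]$, and for $m\ge1$ let $Z_m:=X_m-\max\{X_j:0\le j<m,\ X_j<X_m\}$. Then for $1\le m<\ell$, $\mathrm{Cov}[Z_m,Z_\ell]=0$. *)

theory Defs
  imports "HOL-Probability.Probability"
begin

definition covariance :: "'a measure \<Rightarrow> ('a \<Rightarrow> real) \<Rightarrow> ('a \<Rightarrow> real) \<Rightarrow> real" where
  "covariance M U V =
     (\<integral>\<omega>. (U \<omega> - (\<integral>x. U x \<partial>M)) * (V \<omega> - (\<integral>x. V x \<partial>M)) \<partial>M)"

definition gapZ :: "(nat \<Rightarrow> 'a \<Rightarrow> real) \<Rightarrow> nat \<Rightarrow> 'a \<Rightarrow> real" where
  "gapZ X m \<omega> = X m \<omega> - Max {X j \<omega> | j. j < m \<and> X j \<omega> < X m \<omega>}"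

end

theory Submission
  imports Defs
begin

text \<open>
  Since \<open>Z\<^sub>m\<close> and \<open>Z\<^sub>l\<close> are nonnegative, \<open>E[Z\<^sub>m Z\<^sub>l]\<close> is the integral of
  \<open>P(Z\<^sub>m > s, Z\<^sub>l > t)\<close> over \<open>s, t \<ge> 0\<close>. Given \<open>X\<^sub>m = x\<close> and \<open>X\<^sub>l = y\<close>, this event says that
  \<open>x > s\<close>, \<open>y > t\<close>, \<open>x\<close> avoids the window \<open>[y - t, y)\<close>, each of the \<open>m - 1\<close> points
  \<open>X\<^sub>j\<close> with \<open>j < m\<close> avoids both windows \<open>[x - s, x)\<close> and \<open>[y - t, y)\<close>, and each of
  the \<open>l - m - 1\<close> points strictly between avoids \<open>[y - t, y)\<close>. By independence its probability is
  \<open>\<integral>\<integral> (1 - \<lambda>)\<^bsup>m-1\<^esup> (1 - t)\<^bsup>l-m-1\<^esup> dx dy\<close>, where \<open>\<lambda>\<close> is the length of the union of the two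
  windows. Integrating in the order \<open>s, x, y, t\<close> gives \<open>1/((m+1)(l+1))\<close>, while the case
  \<open>t = 0\<close> gives \<open>E[Z\<^sub>m] = 1/(m+1)\<close> for every \<open>m \<ge> 1\<close>.
\<close>

section \<open>Layer-cake formulas and covariance\<close>

lemma (in prob_space) covariance_eq:
  assumes "integrable M U" "integrable M V" "integrable M (\<lambda>\<omega>. U \<omega> * V \<omega>)"
  shows "covariance M U V = expectation (\<lambda>\<omega>. U \<omega> * V \<omega>) - expectation U * expectation V"
proof -
  have "covariance M U V = expectation (\<lambda>\<omega>. U \<omega> * V \<omega> - expectation U * V \<omega> - expectation V * U \<omega>
      + expectation U * expectation V)"
    unfolding covariance_def by (intro Bochner_Integration.integral_cong) (auto simp: algebra_simps)
  also have "\<dots> = expectation (\<lambda>\<omega>. U \<omega> * V \<omega>) - expectation U * expectation V"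
    using assms by (simp add: prob_space)
  finally show ?thesis .
qed

lemma ennreal_eq_nn_integral_indicator: "ennreal a = (\<integral>\<^sup>+ s. indicator {0..<a} s \<partial>lborel)"
  by (cases "0 \<le> a") (simp_all add: ennreal_neg)

lemma (in sigma_finite_measure) nn_integral_eq_tail_integral:
  assumes [measurable]: "U \<in> borel_measurable M"
  shows "(\<integral>\<^sup>+ \<omega>. ennreal (U \<omega>) \<partial>M)
    = (\<integral>\<^sup>+ s. indicator {0..} s * emeasure M {\<omega> \<in> space M. s < U \<omega>} \<partial>lborel)"
proof -
  interpret pair_sigma_finite M lborel ..
  have "(\<integral>\<^sup>+ \<omega>. ennreal (U \<omega>) \<partial>M)
      = (\<integral>\<^sup>+ \<omega>. \<integral>\<^sup>+ s. indicator {0..} s * indicator {\<omega> \<in> space M. s < U \<omega>} \<omega> \<partial>lborel \<partial>M)"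
    unfolding ennreal_eq_nn_integral_indicator[of "U _"]
    by (intro nn_integral_cong) (auto simp: indicator_def)
  also have "\<dots> = (\<integral>\<^sup>+ s. \<integral>\<^sup>+ \<omega>. indicator {0..} s * indicator {\<omega> \<in> space M. s < U \<omega>} \<omega> \<partial>M \<partial>lborel)"
    by (rule Fubini'[symmetric]) measurable
  also have "\<dots> = (\<integral>\<^sup>+ s. indicator {0..} s * emeasure M {\<omega> \<in> space M. s < U \<omega>} \<partial>lborel)"
    by (intro nn_integral_cong)
      (simp add: nn_integral_cmult nn_integral_indicator)
  finally show ?thesis .
qed

lemma (in sigma_finite_measure) nn_integral_mult_eq_joint_tail_integral:
  assumes [measurable]: "U \<in> borel_measurable M" "V \<in> borel_measurable M"
  shows "(\<integral>\<^sup>+ \<omega>. ennreal (U \<omega>) * ennreal (V \<omega>) \<partial>M)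
    = (\<integral>\<^sup>+ s. \<integral>\<^sup>+ t. indicator {0..} s * indicator {0..} t *
         emeasure M {\<omega> \<in> space M. s < U \<omega> \<and> t < V \<omega>} \<partial>lborel \<partial>lborel)"
proof -
  interpret pair_sigma_finite M lborel ..
  define F where "F \<omega> s t = indicator {0..} s * indicator {0..} t *
      (indicator {\<omega> \<in> space M. s < U \<omega> \<and> t < V \<omega>} \<omega> :: ennreal)" for \<omega> s t
  have [measurable]:
    "(\<lambda>p. F (fst (fst p)) (snd (fst p)) (snd p)) \<in> borel_measurable ((M \<Otimes>\<^sub>M lborel) \<Otimes>\<^sub>M lborel)"
    unfolding F_def by measurable
  have "(\<integral>\<^sup>+ \<omega>. ennreal (U \<omega>) * ennreal (V \<omega>) \<partial>M) = (\<integral>\<^sup>+ \<omega>. \<integral>\<^sup>+ s. \<integral>\<^sup>+ t. F \<omega> s t \<partial>lborel \<partial>lborel \<partial>M)"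
  proof (intro nn_integral_cong)
    fix \<omega> assume "\<omega> \<in> space M"
    have "ennreal (U \<omega>) * ennreal (V \<omega>)
        = (\<integral>\<^sup>+ s. indicator {0..<U \<omega>} s * (\<integral>\<^sup>+ t. indicator {0..<V \<omega>} t \<partial>lborel) \<partial>lborel)"
      by (simp add: nn_integral_multc ennreal_eq_nn_integral_indicator[symmetric])
    also have "\<dots> = (\<integral>\<^sup>+ s. \<integral>\<^sup>+ t. F \<omega> s t \<partial>lborel \<partial>lborel)"
      using \<open>\<omega> \<in> space M\<close>
      by (intro nn_integral_cong) (simp add: F_def nn_integral_cmult[symmetric] indicator_def of_bool_conj)
    finally show "ennreal (U \<omega>) * ennreal (V \<omega>) = (\<integral>\<^sup>+ s. \<integral>\<^sup>+ t. F \<omega> s t \<partial>lborel \<partial>lborel)" .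
  qed
  also have "\<dots> = (\<integral>\<^sup>+ s. \<integral>\<^sup>+ \<omega>. \<integral>\<^sup>+ t. F \<omega> s t \<partial>lborel \<partial>M \<partial>lborel)"
    by (rule Fubini'[symmetric]) measurable
  also have "\<dots> = (\<integral>\<^sup>+ s. \<integral>\<^sup>+ t. \<integral>\<^sup>+ \<omega>. F \<omega> s t \<partial>M \<partial>lborel \<partial>lborel)"
    by (intro nn_integral_cong Fubini'[symmetric]) (unfold F_def, measurable)
  also have "\<dots> = (\<integral>\<^sup>+ s. \<integral>\<^sup>+ t. indicator {0..} s * indicator {0..} t *
         emeasure M {\<omega> \<in> space M. s < U \<omega> \<and> t < V \<omega>} \<partial>lborel \<partial>lborel)"
    by (intro nn_integral_cong)
      (simp add: F_def nn_integral_cmult nn_integral_indicator)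
  finally show ?thesis .
qed

lemma nn_integral_FTC_Icc_mono:
  fixes f F :: "real \<Rightarrow> real"
  assumes "f \<in> borel_measurable borel" "a \<le> b"
    and "\<And>x. (F has_real_derivative f x) (at x)" "\<And>x. x \<in> {a..b} \<Longrightarrow> 0 \<le> f x"
  shows "(\<integral>\<^sup>+ x. ennreal (f x) * indicator {a..b} x \<partial>lborel) = ennreal (F b - F a)" "F a \<le> F b"
proof -
  show "(\<integral>\<^sup>+ x. ennreal (f x) * indicator {a..b} x \<partial>lborel) = ennreal (F b - F a)"
    using assms by (intro nn_integral_FTC_Icc) auto
  show "F a \<le> F b"
  proof (rule DERIV_nonneg_imp_nondecreasing[of a b F])
    fix x assume "a \<le> x" "x \<le> b"
    then show "\<exists>d. (F has_real_derivative d) (at x) \<and> 0 \<le> d"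
      using assms(3,4)[of x] by auto
  qed fact
qed

lemma has_real_derivative_power_const_minus:
  "((\<lambda>x. (c - x) ^ n) has_real_derivative - (real n * (c - x) ^ (n - 1))) (at x)"
  by (rule derivative_eq_intros refl | simp)+

lemma has_real_derivative_power_Suc_minus_const:
  "((\<lambda>x. (x - c) ^ Suc n / Suc n) has_real_derivative (x - c) ^ n) (at x)"
  by (rule derivative_eq_intros refl | simp)+

lemma has_real_derivative_power_Suc_const_minus:
  "((\<lambda>x. (c - x) ^ Suc n / Suc n) has_real_derivative - ((c - x) ^ n)) (at x)"
  by (rule derivative_eq_intros refl | simp)+

lemma nn_integral_power_one_minus:
  "(\<integral>\<^sup>+ s. ennreal ((1 - s) ^ n) * indicator {0..1} s \<partial>lborel) = ennreal (1 / (n + 1))"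
proof -
  have "(\<integral>\<^sup>+ s. ennreal ((1 - s) ^ n) * indicator {0..1} s \<partial>lborel)
      = ennreal (- ((1 - 1) ^ Suc n) / Suc n - (- ((1 - 0) ^ Suc n) / Suc n))"
  proof (rule nn_integral_FTC_Icc)
    fix s :: real
    show "((\<lambda>s. - ((1 - s) ^ Suc n) / Suc n) has_real_derivative (1 - s) ^ n) (at s)"
      by (rule derivative_eq_intros refl | simp)+
  qed auto
  then show ?thesis by simp
qed

lemma emeasure_lborel_Ico_Un:
  fixes a1 b1 a2 b2 :: real
  assumes "a1 \<le> b1" "a2 \<le> b2"
  shows "emeasure lborel ({a1..<b1} \<union> {a2..<b2})
    = ennreal (b1 - a1 + (b2 - a2) - max 0 (min b1 b2 - max a1 a2))"
proof -
  have fin: "{a..<b} \<in> fmeasurable lborel" for a b :: real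
    by (cases "a \<le> b") (auto intro!: fmeasurableI)
  have "measure lborel ({a1..<b1} \<inter> {a2..<b2}) = max 0 (min b1 b2 - max a1 a2)"
    by (cases "max a1 a2 \<le> min b1 b2") (auto simp: Int_atLeastLessThan)
  then show ?thesis
    using assms by (simp add: emeasure_eq_measure2 fin fmeasurable.Un measure_Un3)
qed

section \<open>The joint tail function\<close>

text \<open>The length of \<open>[x - s, x) \<union> [y - t, y)\<close>, cf. \<open>emeasure_lborel_Ico_Un\<close>.\<close>
definition windows_length :: "real \<Rightarrow> real \<Rightarrow> real \<Rightarrow> real \<Rightarrow> real" where
  "windows_length s t x y = s + t - max 0 (min x y - max (x - s) (y - t))"

lemma windows_length_nonneg: "0 \<le> s \<Longrightarrow> 0 \<le> t \<Longrightarrow> 0 \<le> windows_length s t x y"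
  unfolding windows_length_def by (auto simp: max_def min_def)

lemma windows_length_le_one:
  "0 \<le> s \<Longrightarrow> 0 \<le> t \<Longrightarrow> s < x \<Longrightarrow> x \<le> 1 \<Longrightarrow> t < y \<Longrightarrow> y \<le> 1 \<Longrightarrow> windows_length s t x y \<le> 1"
  unfolding windows_length_def by (auto simp: max_def min_def)

lemma windows_length_zero_right: "0 \<le> s \<Longrightarrow> windows_length s 0 x y = s"
  unfolding windows_length_def by (auto simp: max_def min_def)

lemma windows_length_disjoint:
  "0 \<le> t \<Longrightarrow> x < y - t \<or> y \<le> x \<and> s \<le> x - y \<Longrightarrow> windows_length s t x y = s + t"
  unfolding windows_length_def by (auto simp: max_def min_def)

lemma windows_length_overlap:
  "0 \<le> t \<Longrightarrow> y \<le> x \<Longrightarrow> x - y \<le> s \<Longrightarrow> s \<le> x - y + t \<Longrightarrow> windows_length s t x y = x - y + t"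
  unfolding windows_length_def by (auto simp: max_def min_def)

lemma windows_length_nested:
  "0 \<le> t \<Longrightarrow> y \<le> x \<Longrightarrow> x - y + t \<le> s \<Longrightarrow> windows_length s t x y = s"
  unfolding windows_length_def by (auto simp: max_def min_def)

definition joint_tail_density :: "nat \<Rightarrow> real \<Rightarrow> real \<Rightarrow> real \<Rightarrow> real \<Rightarrow> real" where
  "joint_tail_density m s t x y =
     (if s < x \<and> x \<le> 1 \<and> t < y \<and> y \<le> 1 \<and> (x < y - t \<or> y \<le> x)
      then (1 - windows_length s t x y) ^ (m - 1) else 0)"

text \<open>
  For \<open>s, t \<ge> 0\<close> and \<open>l = m + k + 1\<close>, \<open>joint_tail m k s t\<close> is \<open>P(Z\<^sub>m > s, Z\<^sub>l > t)\<close>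
  (see \<open>emeasure_gaps_exceed\<close>): \<open>x\<close> and \<open>y\<close> stand for \<open>X\<^sub>m\<close> and \<open>X\<^sub>l\<close>, and
  \<open>(1 - t)\<^sup>k\<close> is the probability that the \<open>k\<close> points in between avoid \<open>[y - t, y)\<close>.
\<close>
definition joint_tail :: "nat \<Rightarrow> nat \<Rightarrow> real \<Rightarrow> real \<Rightarrow> ennreal" where
  "joint_tail m k s t =
     ennreal ((1 - t) ^ k) * (\<integral>\<^sup>+ y. \<integral>\<^sup>+ x. ennreal (joint_tail_density m s t x y) \<partial>lborel \<partial>lborel)"

lemma borel_measurable_joint_tail_density[measurable]:
  assumes [measurable]: "f \<in> borel_measurable N" "g \<in> borel_measurable N"
    "u \<in> borel_measurable N" "v \<in> borel_measurable N"
  shows "(\<lambda>p. joint_tail_density m (f p) (g p) (u p) (v p)) \<in> borel_measurable N"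
  unfolding joint_tail_density_def windows_length_def by measurable

lemma borel_measurable_joint_tail[measurable]:
  assumes [measurable]: "f \<in> borel_measurable N" "g \<in> borel_measurable N"
  shows "(\<lambda>p. joint_tail m k (f p) (g p)) \<in> borel_measurable N"
  unfolding joint_tail_def by measurable

lemma joint_tail_zero_right:
  assumes "1 \<le> m" "0 \<le> s"
  shows "joint_tail m k s 0 = ennreal ((1 - s) ^ m) * indicator {..1} s"
proof -
  have "(\<integral>\<^sup>+ x. ennreal (joint_tail_density m s 0 x y) \<partial>lborel)
      = ennreal ((1 - s) ^ m) * indicator {..1} s * indicator {0<..1} y" for y
  proof (cases "0 < y \<and> y \<le> 1 \<and> s \<le> 1")
    case True
    have "(\<integral>\<^sup>+ x. ennreal (joint_tail_density m s 0 x y) \<partial>lborel)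
        = (\<integral>\<^sup>+ x. ennreal ((1 - s) ^ (m - 1)) * indicator {s<..1} x \<partial>lborel)"
      using True assms
      by (intro nn_integral_cong)
        (auto simp: joint_tail_density_def windows_length_zero_right indicator_def)
    also have "\<dots> = ennreal ((1 - s) ^ (m - 1)) * ennreal (1 - s)"
      using True by (simp add: nn_integral_cmult_indicator)
    also have "\<dots> = ennreal ((1 - s) ^ m)"
      using True assms power_minus_mult[of m "1 - s"] by (simp add: ennreal_mult[symmetric])
    finally show ?thesis using True by simp
  next
    case False
    then have "joint_tail_density m s 0 x y = 0" for x
      by (auto simp: joint_tail_density_def)
    with False show ?thesis by auto
  qed
  then show ?thesis
    by (simp add: joint_tail_def nn_integral_cmult_indicator)
qed

lemma nn_integral_joint_tail_zero_right:
  assumes "1 \<le> m"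
  shows "(\<integral>\<^sup>+ s. indicator {0..} s * joint_tail m k s 0 \<partial>lborel) = ennreal (1 / (m + 1))"
proof -
  have "(\<integral>\<^sup>+ s. indicator {0..} s * joint_tail m k s 0 \<partial>lborel)
      = (\<integral>\<^sup>+ s. ennreal ((1 - s) ^ m) * indicator {0..1} s \<partial>lborel)"
    using assms by (intro nn_integral_cong) (auto simp: joint_tail_zero_right indicator_def)
  then show ?thesis by (simp add: nn_integral_power_one_minus)
qed

lemma nn_integral_density_ds_before:
  assumes "1 \<le> m" "0 \<le> t" "0 < x" "x < y - t" "y \<le> 1"
  shows "(\<integral>\<^sup>+ s. indicator {0..} s * ennreal (joint_tail_density m s t x y) \<partial>lborel)
    = ennreal (((1 - t) ^ m - (1 - t - x) ^ m) / m)"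
proof -
  have "(\<integral>\<^sup>+ s. indicator {0..} s * ennreal (joint_tail_density m s t x y) \<partial>lborel)
      = (\<integral>\<^sup>+ s. ennreal ((1 - t - s) ^ (m - 1)) * indicator {0..x} s \<partial>lborel)"
  proof (rule nn_integral_cong_AE)
    show "AE s in lborel. indicator {0..} s * ennreal (joint_tail_density m s t x y)
        = ennreal ((1 - t - s) ^ (m - 1)) * indicator {0..x} s"
      using AE_lborel_singleton[of x]
      by eventually_elim
        (use assms in
          \<open>auto simp: joint_tail_density_def windows_length_disjoint indicator_def algebra_simps\<close>)
  qed
  also have "\<dots> = ennreal (- ((1 - t - x) ^ m) / m - (- ((1 - t - 0) ^ m) / m))"
  proof (rule nn_integral_FTC_Icc)
    fix s :: real assume "s \<in> {0..x}"
    show "((\<lambda>s. - ((1 - t - s) ^ m) / m) has_real_derivative (1 - t - s) ^ (m - 1)) (at s)"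
      using assms by (rule_tac derivative_eq_intros refl | simp)+
    show "0 \<le> (1 - t - s) ^ (m - 1)"
      using assms \<open>s \<in> {0..x}\<close> by simp
  qed (use assms in auto)
  finally show ?thesis by (simp add: diff_divide_distrib)
qed

lemma joint_tail_density_after_window:
  assumes "0 \<le> t" "t < y" "y \<le> x" "x \<le> 1" "s \<noteq> x - y + t" "s \<noteq> x"
  shows "indicator {0..} s * ennreal (joint_tail_density m s t x y)
    = ennreal ((1 - t - s) ^ (m - 1)) * indicator {0..x - y} s
      + (ennreal ((1 - (x - y + t)) ^ (m - 1)) * indicator {x - y<..x - y + t} s
      + ennreal ((1 - s) ^ (m - 1)) * indicator {x - y + t..x} s)"
proof -
  consider "s < 0" | "0 \<le> s" "s \<le> x - y" | "x - y < s" "s < x - y + t" | "x - y + t < s" "s < x"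
    | "x < s"
    using assms by linarith
  then show ?thesis
  proof cases
    case 2
    then have "windows_length s t x y = s + t"
      using assms by (intro windows_length_disjoint) auto
    then show ?thesis
      using 2 assms by (simp add: joint_tail_density_def indicator_def algebra_simps)
  next
    case 3
    then have "windows_length s t x y = x - y + t"
      using assms by (intro windows_length_overlap) auto
    then show ?thesis
      using 3 assms by (simp add: joint_tail_density_def indicator_def)
  next
    case 4
    then have "windows_length s t x y = s"
      using assms by (intro windows_length_nested) auto
    then show ?thesis
      using 4 assms by (simp add: joint_tail_density_def indicator_def)
  qed (use assms in \<open>simp_all add: joint_tail_density_def indicator_def\<close>)
qed

lemma nn_integral_density_ds_after:
  assumes "1 \<le> m" "0 \<le> t" "t < y" "y \<le> x" "x \<le> 1"
  shows "(\<integral>\<^sup>+ s. indicator {0..} s * ennreal (joint_tail_density m s t x y) \<partial>lborel)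
    = ennreal (((1 - t) ^ m - (1 - x) ^ m) / m + t * (1 - x + y - t) ^ (m - 1))"
proof -
  define d where "d = x - y"
  define c where "c = (1 - (d + t)) ^ (m - 1)"
  define F1 where "F1 s = - ((1 - t - s) ^ m) / m" for s
  define F3 where "F3 s = - ((1 - s) ^ m) / m" for s
  have d: "0 \<le> d" "d + t \<le> x" "0 \<le> c" using assms by (auto simp: d_def c_def)
  have dF1: "(F1 has_real_derivative (1 - t - s) ^ (m - 1)) (at s)" for s
    unfolding F1_def using assms by (rule_tac derivative_eq_intros refl | simp)+
  have dF3: "(F3 has_real_derivative (1 - s) ^ (m - 1)) (at s)" for s
    unfolding F3_def using assms by (rule_tac derivative_eq_intros refl | simp)+
  have meas: "(\<lambda>s::real. (1 - t - s) ^ (m - 1)) \<in> borel_measurable borel"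
    "(\<lambda>s::real. (1 - s) ^ (m - 1)) \<in> borel_measurable borel"
    by simp_all
  note F1 = nn_integral_FTC_Icc_mono[OF meas(1) \<open>0 \<le> d\<close> dF1]
  note F3 = nn_integral_FTC_Icc_mono[OF meas(2) \<open>d + t \<le> x\<close> dF3]
  have "(\<integral>\<^sup>+ s. indicator {0..} s * ennreal (joint_tail_density m s t x y) \<partial>lborel)
      = (\<integral>\<^sup>+ s. ennreal ((1 - t - s) ^ (m - 1)) * indicator {0..d} s + (ennreal c * indicator {d<..d + t} s
           + ennreal ((1 - s) ^ (m - 1)) * indicator {d + t..x} s) \<partial>lborel)"
    using AE_lborel_singleton[of "d + t"] AE_lborel_singleton[of x]
    by (intro nn_integral_cong_AE, eventually_elim)
      (use assms in \<open>simp add: joint_tail_density_after_window d_def c_def\<close>)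
  also have "\<dots> = ennreal (F1 d - F1 0) + (ennreal (c * t) + ennreal (F3 x - F3 (d + t)))"
    using F1(1) F3(1) d assms by (simp add: nn_integral_add nn_integral_cmult_indicator ennreal_mult)
  also have "\<dots> = ennreal (((1 - t) ^ m - (1 - x) ^ m) / m + t * (1 - x + y - t) ^ (m - 1))"
  proof -
    have "F1 d - F1 0 + (c * t + (F3 x - F3 (d + t)))
        = ((1 - t) ^ m - (1 - x) ^ m) / m + t * (1 - x + y - t) ^ (m - 1)"
      using assms by (simp add: F1_def F3_def c_def d_def field_simps)
    moreover have "0 \<le> c * t" using d assms by simp
    ultimately show ?thesis
      using F1(2) F3(2) assms d by (simp add: ennreal_plus[symmetric] del: ennreal_plus)
  qed
  finally show ?thesis .
qed

lemma nn_integral_density_ds: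
  assumes "1 \<le> m" "0 \<le> t" "t < y" "y \<le> 1" "x \<noteq> 0" "x \<noteq> y - t"
  shows "(\<integral>\<^sup>+ s. indicator {0..} s * ennreal (joint_tail_density m s t x y) \<partial>lborel)
    = ennreal (((1 - t) ^ m - (1 - t - x) ^ m) / m) * indicator {0..y - t} x
      + ennreal (((1 - t) ^ m - (1 - x) ^ m) / m + t * (1 - x + y - t) ^ (m - 1)) * indicator {y..1} x"
proof -
  consider "0 < x" "x < y - t" | "y \<le> x" "x \<le> 1" | "x < 0 \<or> y - t < x \<and> x < y \<or> 1 < x"
    using assms by linarith
  then show ?thesis
  proof cases
    case 1
    then show ?thesis using nn_integral_density_ds_before[of m t x y] assms by (simp add: indicator_def)
  next
    case 2
    then show ?thesis using nn_integral_density_ds_after[of m t y x] assms by (simp add: indicator_def)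
  next
    case 3
    then have "(\<lambda>s. indicator {0..} s * ennreal (joint_tail_density m s t x y)) = (\<lambda>_. 0)"
      by (auto simp: joint_tail_density_def indicator_def)
    with 3 show ?thesis using assms by (auto simp: indicator_def)
  qed
qed

lemma nn_integral_density_ds_dx:
  assumes "1 \<le> m" "0 \<le> t" "t < y" "y \<le> 1"
  shows "(\<integral>\<^sup>+ x. \<integral>\<^sup>+ s. indicator {0..} s * ennreal (joint_tail_density m s t x y) \<partial>lborel \<partial>lborel)
    = ennreal ((1 - t) ^ Suc m / Suc m + t * ((1 - t) ^ m - (y - t) ^ m) / m)"
proof -
  define g1 where "g1 x = ((1 - t) ^ m - (1 - t - x) ^ m) / m" for x
  define g2 where "g2 x = ((1 - t) ^ m - (1 - x) ^ m) / m + t * (1 - x + y - t) ^ (m - 1)" for x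
  define G1 where "G1 x = ((1 - t) ^ m * x + (1 - t - x) ^ Suc m / Suc m) / m" for x
  define G2 where "G2 x = ((1 - t) ^ m * x + (1 - x) ^ Suc m / Suc m - t * (1 - t + y - x) ^ m) / m" for x
  have dG1: "(G1 has_real_derivative g1 x) (at x)" for x
    using DERIV_cdivide[OF DERIV_add[OF DERIV_cmult[OF DERIV_ident]
        has_real_derivative_power_Suc_const_minus]]
    by (simp add: G1_def[abs_def] g1_def)
  have dG2: "(G2 has_real_derivative g2 x) (at x)" for x
    using DERIV_cdivide[OF DERIV_diff[OF DERIV_add[OF DERIV_cmult[OF DERIV_ident]
        has_real_derivative_power_Suc_const_minus] DERIV_cmult[OF has_real_derivative_power_const_minus]]]
    unfolding G2_def[abs_def] by (rule DERIV_cong) (use assms(1) in \<open>simp add: g2_def field_simps\<close>)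
  have meas[measurable]: "g1 \<in> borel_measurable borel" "g2 \<in> borel_measurable borel"
    unfolding g1_def[abs_def] g2_def[abs_def] by measurable
  have g1_nonneg: "0 \<le> g1 x" if "x \<in> {0..y - t}" for x
  proof -
    have "(1 - t - x) ^ m \<le> (1 - t) ^ m" using assms that by (intro power_mono) auto
    then show ?thesis unfolding g1_def by (intro divide_nonneg_nonneg) auto
  qed
  have g2_nonneg: "0 \<le> g2 x" if "x \<in> {y..1}" for x
  proof -
    have "(1 - x) ^ m \<le> (1 - t) ^ m" using assms that by (intro power_mono) auto
    then show ?thesis
      unfolding g2_def using assms that by (intro add_nonneg_nonneg divide_nonneg_nonneg) auto
  qed
  have "y - t \<ge> 0" using assms by simp
  note G1 = nn_integral_FTC_Icc_mono[OF meas(1) this dG1 g1_nonneg]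
  note G2 = nn_integral_FTC_Icc_mono[OF meas(2) \<open>y \<le> 1\<close> dG2 g2_nonneg]
  have "(\<integral>\<^sup>+ x. \<integral>\<^sup>+ s. indicator {0..} s * ennreal (joint_tail_density m s t x y) \<partial>lborel \<partial>lborel)
      = (\<integral>\<^sup>+ x. ennreal (g1 x) * indicator {0..y - t} x + ennreal (g2 x) * indicator {y..1} x \<partial>lborel)"
    using AE_lborel_singleton[of 0] AE_lborel_singleton[of "y - t"]
    by (intro nn_integral_cong_AE, eventually_elim)
      (use assms in \<open>simp add: nn_integral_density_ds g1_def g2_def\<close>)
  also have "\<dots> = (\<integral>\<^sup>+ x. ennreal (g1 x) * indicator {0..y - t} x \<partial>lborel)
      + (\<integral>\<^sup>+ x. ennreal (g2 x) * indicator {y..1} x \<partial>lborel)"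
    by (rule nn_integral_add) measurable
  also have "\<dots> = ennreal (G1 (y - t) - G1 0 + (G2 1 - G2 y))"
    using G1 G2 by (simp add: ennreal_plus[symmetric] del: ennreal_plus)
  also have "G1 (y - t) - G1 0 + (G2 1 - G2 y)
      = (1 - t) ^ Suc m / Suc m + t * ((1 - t) ^ m - (y - t) ^ m) / m"
  proof -
    define p q r where "p = (1 - t) ^ m" and "q = (y - t) ^ m" and "r = (1 - y) ^ Suc m"
    define a b where "a = real m" and "b = real (Suc m)"
    have "0 < a" "0 < b" "b = a + 1" using assms by (simp_all add: a_def b_def)
    have G: "G1 (y - t) = (p * (y - t) + r / b) / a" "G1 0 = (1 - t) * p / b / a"
      "G2 1 = (p - t * q) / a" "G2 y = (p * y + r / b - t * p) / a"
      by (simp_all add: G1_def G2_def p_def q_def r_def a_def b_def)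
    have "G1 (y - t) - G1 0 + (G2 1 - G2 y) = (p - (1 - t) * p / b - t * q) / a"
      unfolding G using \<open>0 < a\<close> \<open>0 < b\<close> by (simp add: field_simps)
    also have "\<dots> = (1 - t) * p / b + t * (p - q) / a"
      using \<open>0 < a\<close> \<open>b = a + 1\<close> by (simp add: field_simps)
    also have "\<dots> = (1 - t) ^ Suc m / Suc m + t * ((1 - t) ^ m - (y - t) ^ m) / m"
      by (simp add: p_def q_def a_def b_def)
    finally show ?thesis .
  qed
  finally show ?thesis .
qed

lemma nn_integral_density_ds_dx_dy:
  assumes "1 \<le> m" "0 \<le> t" "t < 1"
  shows "(\<integral>\<^sup>+ y. \<integral>\<^sup>+ x. \<integral>\<^sup>+ s. indicator {0..} s * ennreal (joint_tail_density m s t x y)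
      \<partial>lborel \<partial>lborel \<partial>lborel) = ennreal ((1 - t) ^ Suc m / Suc m)"
proof -
  define v where "v y = (1 - t) ^ Suc m / Suc m + t * ((1 - t) ^ m - (y - t) ^ m) / m" for y
  define c where "c = (1 - t) ^ Suc m / Suc m + t * (1 - t) ^ m / m"
  define H where "H y = c * y - t / m * ((y - t) ^ Suc m / Suc m)" for y
  have dH: "(H has_real_derivative v y) (at y)" for y
    using DERIV_diff[OF DERIV_cmult[OF DERIV_ident]
        DERIV_cmult[OF has_real_derivative_power_Suc_minus_const]]
    unfolding H_def[abs_def]
    by (rule DERIV_cong) (simp add: v_def c_def right_diff_distrib diff_divide_distrib)
  have v_nonneg: "0 \<le> v y" if "t \<le> y" "y \<le> 1" for y
  proof -
    have "(y - t) ^ m \<le> (1 - t) ^ m" using assms that by (intro power_mono) auto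
    then show ?thesis
      unfolding v_def using assms by (intro add_nonneg_nonneg divide_nonneg_nonneg mult_nonneg_nonneg) auto
  qed
  have "(\<integral>\<^sup>+ y. \<integral>\<^sup>+ x. \<integral>\<^sup>+ s. indicator {0..} s * ennreal (joint_tail_density m s t x y)
      \<partial>lborel \<partial>lborel \<partial>lborel) = (\<integral>\<^sup>+ y. ennreal (v y) * indicator {t..1} y \<partial>lborel)"
  proof (rule nn_integral_cong_AE)
    show "AE y in lborel. (\<integral>\<^sup>+ x. \<integral>\<^sup>+ s. indicator {0..} s * ennreal (joint_tail_density m s t x y)
        \<partial>lborel \<partial>lborel) = ennreal (v y) * indicator {t..1} y"
      using AE_lborel_singleton[of t]
    proof eventually_elim
      case (elim y)
      show ?case
      proof (cases "t < y \<and> y \<le> 1")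
        case True
        then show ?thesis using nn_integral_density_ds_dx[of m t y] assms by (simp add: v_def)
      next
        case False
        then have "(\<lambda>x. \<integral>\<^sup>+ s. indicator {0..} s * ennreal (joint_tail_density m s t x y) \<partial>lborel)
            = (\<lambda>_. 0)"
          by (auto simp: joint_tail_density_def)
        with False elim show ?thesis by (auto simp: indicator_def)
      qed
    qed
  qed
  also have "\<dots> = ennreal (H 1 - H t)"
  proof (rule nn_integral_FTC_Icc)
    show "v \<in> borel_measurable borel" unfolding v_def[abs_def] by measurable
  qed (use assms dH v_nonneg in auto)
  also have "H 1 - H t = (1 - t) ^ Suc m / Suc m"
  proof -
    define p a b where "p = (1 - t) ^ Suc m" and "a = real m" and "b = real (Suc m)"
    have "0 < a" "0 < b" "b - 1 = a" using assms by (simp_all add: a_def b_def)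
    have "H 1 - H t = c * (1 - t) - t / a * (p / b)"
      by (simp add: H_def p_def a_def b_def algebra_simps)
    also have "\<dots> = (1 - t) * p / b + t * p / a - t / a * (p / b)"
      by (simp add: c_def p_def a_def b_def algebra_simps)
    also have "\<dots> = (1 - t) * p / b + t * p * (b - 1) / (a * b)"
      using \<open>0 < a\<close> \<open>0 < b\<close> by (simp add: field_simps)
    also have "\<dots> = p / b"
      using \<open>0 < a\<close> \<open>0 < b\<close> unfolding \<open>b - 1 = a\<close> by (simp add: field_simps)
    finally show ?thesis by (simp add: p_def b_def)
  qed
  finally show ?thesis .
qed

lemma nn_integral_joint_tail_ds:
  assumes "1 \<le> m" "0 \<le> t"
  shows "(\<integral>\<^sup>+ s. indicator {0..} s * joint_tail m k s t \<partial>lborel)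
    = ennreal ((1 - t) ^ (m + k + 1) / (m + 1)) * indicator {..1} t"
proof (cases "t < 1")
  case True
  have "indicator {0..} s * joint_tail m k s t = ennreal ((1 - t) ^ k) *
      (\<integral>\<^sup>+ y. \<integral>\<^sup>+ x. indicator {0..} s * ennreal (joint_tail_density m s t x y) \<partial>lborel \<partial>lborel)" for s
    by (cases "0 \<le> s") (simp_all add: joint_tail_def)
  then have "(\<integral>\<^sup>+ s. indicator {0..} s * joint_tail m k s t \<partial>lborel) = ennreal ((1 - t) ^ k) *
      (\<integral>\<^sup>+ s. \<integral>\<^sup>+ y. \<integral>\<^sup>+ x. indicator {0..} s * ennreal (joint_tail_density m s t x y)
         \<partial>lborel \<partial>lborel \<partial>lborel)"
    by (simp add: nn_integral_cmult)
  also have "(\<integral>\<^sup>+ s. \<integral>\<^sup>+ y. \<integral>\<^sup>+ x. indicator {0..} s * ennreal (joint_tail_density m s t x y)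
         \<partial>lborel \<partial>lborel \<partial>lborel)
      = (\<integral>\<^sup>+ y. \<integral>\<^sup>+ s. \<integral>\<^sup>+ x. indicator {0..} s * ennreal (joint_tail_density m s t x y)
         \<partial>lborel \<partial>lborel \<partial>lborel)"
    by (rule lborel_pair.Fubini'[symmetric]) measurable
  also have "\<dots> = (\<integral>\<^sup>+ y. \<integral>\<^sup>+ x. \<integral>\<^sup>+ s. indicator {0..} s * ennreal (joint_tail_density m s t x y)
         \<partial>lborel \<partial>lborel \<partial>lborel)"
    by (intro nn_integral_cong lborel_pair.Fubini'[symmetric]) measurable
  also have "\<dots> = ennreal ((1 - t) ^ Suc m / Suc m)"
    using assms True by (rule nn_integral_density_ds_dx_dy)
  finally show ?thesis
    using True assms by (simp add: ennreal_mult[symmetric] power_add mult_ac)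
next
  case False
  then have "joint_tail_density m s t x y = 0" for s x y
    by (simp add: joint_tail_density_def)
  then show ?thesis
    using False by (cases "t = 1") (simp_all add: joint_tail_def)
qed

lemma nn_integral_joint_tail:
  assumes "1 \<le> m"
  shows "(\<integral>\<^sup>+ s. \<integral>\<^sup>+ t. indicator {0..} s * indicator {0..} t * joint_tail m k s t \<partial>lborel \<partial>lborel)
    = ennreal (1 / ((m + 1) * (m + k + 2)))"
proof -
  have "(\<integral>\<^sup>+ s. \<integral>\<^sup>+ t. indicator {0..} s * indicator {0..} t * joint_tail m k s t \<partial>lborel \<partial>lborel)
      = (\<integral>\<^sup>+ t. \<integral>\<^sup>+ s. indicator {0..} t * (indicator {0..} s * joint_tail m k s t) \<partial>lborel \<partial>lborel)"
    by (subst lborel_pair.Fubini') (measurable, simp add: mult_ac)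
  also have "\<dots>
      = (\<integral>\<^sup>+ t. indicator {0..} t * (\<integral>\<^sup>+ s. indicator {0..} s * joint_tail m k s t \<partial>lborel) \<partial>lborel)"
    by (simp add: nn_integral_cmult)
  also have "\<dots>
      = (\<integral>\<^sup>+ t. ennreal (1 / (m + 1)) * (ennreal ((1 - t) ^ (m + k + 1)) * indicator {0..1} t) \<partial>lborel)"
  proof (intro nn_integral_cong)
    fix t :: real
    show "indicator {0..} t * (\<integral>\<^sup>+ s. indicator {0..} s * joint_tail m k s t \<partial>lborel)
        = ennreal (1 / (m + 1)) * (ennreal ((1 - t) ^ (m + k + 1)) * indicator {0..1} t)"
      using assms by (cases "0 \<le> t"; cases "t \<le> 1")
        (simp_all add: nn_integral_joint_tail_ds ennreal_mult[symmetric])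
  qed
  also have "\<dots> = ennreal (1 / (m + 1)) * ennreal (1 / (m + k + 2))"
    using nn_integral_power_one_minus[of "m + k + 1"] by (simp add: nn_integral_cmult add_ac)
  finally show ?thesis by (simp add: ennreal_mult[symmetric] add_ac)
qed

section \<open>Uniform points avoiding windows\<close>

abbreviation unif01 :: "real measure" where
  "unif01 \<equiv> uniform_measure lborel {0<..1}"

lemma sets_unif01[measurable_cong]: "sets unif01 = sets borel"
  by simp

lemma prob_space_unif01: "prob_space unif01"
  by (rule prob_space_uniform_measure) auto

lemma nn_integral_unif01:
  assumes "f \<in> borel_measurable borel" "\<And>x. x \<notin> {0<..1} \<Longrightarrow> f x = 0"
  shows "(\<integral>\<^sup>+ x. f x \<partial>unif01) = (\<integral>\<^sup>+ x. f x \<partial>lborel)"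
proof -
  have "(\<integral>\<^sup>+ x. f x \<partial>unif01) = (\<integral>\<^sup>+ x. f x * indicator {0<..1} x \<partial>lborel)"
    using assms by (simp add: nn_integral_uniform_measure divide_ennreal_def)
  also have "\<dots> = (\<integral>\<^sup>+ x. f x \<partial>lborel)"
    using assms by (intro nn_integral_cong) (auto simp: indicator_def)
  finally show ?thesis .
qed

lemma emeasure_unif01_Compl:
  assumes "A \<subseteq> {0<..1}" "A \<in> sets borel" "emeasure lborel A = ennreal a" "0 \<le> a"
  shows "emeasure unif01 (- A) = ennreal (1 - a)"
proof -
  have "emeasure lborel A \<le> emeasure lborel {0<..1::real}"
    using assms by (intro emeasure_mono) auto
  then have "a \<le> 1" using assms by simp
  have "emeasure unif01 (- A) = emeasure lborel ({0<..1} - A)"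
    using assms by (simp add: emeasure_uniform_measure divide_ennreal_def Diff_eq Int_commute)
  also have "\<dots> = emeasure lborel {0<..1::real} - emeasure lborel A"
    using assms by (intro emeasure_Diff) auto
  also have "\<dots> = ennreal (1 - a)"
    using assms ennreal_minus[of a 1] by simp
  finally show ?thesis .
qed

lemma measurable_component_unif01:
  "j \<in> J \<Longrightarrow> (\<lambda>w. w j) \<in> borel_measurable (PiM J (\<lambda>_. unif01))"
  using measurable_component_singleton[of j J "\<lambda>_. unif01"]
  by (simp add: measurable_cong_sets[OF refl sets_unif01])

lemma (in product_sigma_finite) nn_integral_PiM_insert2:
  assumes "finite K" "m \<notin> K" "l \<notin> insert m K"
    and "(\<lambda>w. f (w m) (w l) w) \<in> borel_measurable (PiM (insert l (insert m K)) M)"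
    and "\<And>y. (\<lambda>w. f (w m) y w) \<in> borel_measurable (PiM (insert m K) M)"
    and "\<And>x y w i z. i \<notin> K \<Longrightarrow> f x y (w(i := z)) = f x y w"
  shows "(\<integral>\<^sup>+ w. f (w m) (w l) w \<partial>PiM (insert l (insert m K)) M)
    = (\<integral>\<^sup>+ y. \<integral>\<^sup>+ x. \<integral>\<^sup>+ w. f x y w \<partial>PiM K M \<partial>M m \<partial>M l)"
proof -
  have "m \<noteq> l" using assms(3) by auto
  then have "(\<integral>\<^sup>+ w. f (w m) (w l) w \<partial>PiM (insert l (insert m K)) M)
      = (\<integral>\<^sup>+ y. \<integral>\<^sup>+ w. f (w m) y w \<partial>PiM (insert m K) M \<partial>M l)"
    using assms by (simp add: product_nn_integral_insert_rev)
  also have "\<dots> = (\<integral>\<^sup>+ y. \<integral>\<^sup>+ x. \<integral>\<^sup>+ w. f x y w \<partial>PiM K M \<partial>M m \<partial>M l)"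
    using assms by (intro nn_integral_cong) (simp add: product_nn_integral_insert_rev)
  finally show ?thesis .
qed

lemma prod_of_bool:
  "finite A \<Longrightarrow> (\<Prod>x\<in>A. of_bool (P x)) = (of_bool (\<forall>x\<in>A. P x) :: 'a :: comm_semiring_1)"
  by (induction A rule: finite_induct) auto

text \<open>
  For \<open>x\<^sub>0 = 0\<close> and \<open>s \<ge> 0\<close> this is the event \<open>Z\<^sub>n > s\<close> (see \<open>less_gapZ_iff\<close>); the point
  \<open>x\<^sub>0\<close> is accounted for by \<open>s < x\<^sub>n\<close>.
\<close>
definition left_gap_exceeds :: "nat \<Rightarrow> real \<Rightarrow> (nat \<Rightarrow> real) \<Rightarrow> bool" where
  "left_gap_exceeds n s x \<longleftrightarrow> s < x n \<and> (\<forall>j\<in>{1..<n}. x j \<notin> {x n - s..<x n})"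

definition pair_compatible :: "real \<Rightarrow> real \<Rightarrow> real \<Rightarrow> real \<Rightarrow> bool" where
  "pair_compatible s t x y \<longleftrightarrow> s < x \<and> t < y \<and> x \<notin> {y - t..<y}"

definition avoids_windows :: "nat \<Rightarrow> real \<Rightarrow> real \<Rightarrow> real \<Rightarrow> real \<Rightarrow> nat \<Rightarrow> real \<Rightarrow> bool" where
  "avoids_windows m s t x y j v \<longleftrightarrow> (j < m \<longrightarrow> v \<notin> {x - s..<x}) \<and> v \<notin> {y - t..<y}"

lemma left_gaps_exceed_iff:
  assumes "1 \<le> m" "m < l"
  shows "left_gap_exceeds m s x \<and> left_gap_exceeds l t x \<longleftrightarrow>
    pair_compatible s t (x m) (x l) \<and> (\<forall>j\<in>{1..l} - {m, l}. avoids_windows m s t (x m) (x l) j (x j))"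
  using assms unfolding left_gap_exceeds_def pair_compatible_def avoids_windows_def
  by (auto; (metis atLeastLessThan_iff le_trans less_imp_le_nat nat_less_le)?)

lemma measurable_left_gap_exceeds:
  assumes "1 \<le> n" "n \<le> l" and [measurable]: "f \<in> N \<rightarrow>\<^sub>M PiM {1..l} (\<lambda>_. borel)"
  shows "Measurable.pred N (\<lambda>\<omega>. left_gap_exceeds n s (f \<omega>))"
proof -
  have comp: "(\<lambda>\<omega>. f \<omega> j) \<in> borel_measurable N" if "j \<in> {1..l}" for j
    using that by measurable
  have [measurable]: "(\<lambda>\<omega>. f \<omega> n) \<in> borel_measurable N"
    using assms by (intro comp) auto
  have "Measurable.pred N (\<lambda>\<omega>. \<forall>j\<in>{1..<n}. f \<omega> j \<notin> {f \<omega> n - s..<f \<omega> n})"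
  proof (rule pred_intros_countable_bounded(3))
    fix j assume "j \<in> {1..<n}"
    then have [measurable]: "(\<lambda>\<omega>. f \<omega> j) \<in> borel_measurable N"
      using assms by (intro comp) auto
    show "Measurable.pred N (\<lambda>\<omega>. f \<omega> j \<notin> {f \<omega> n - s..<f \<omega> n})"
      unfolding atLeastLessThan_iff by measurable
  qed
  moreover have "Measurable.pred N (\<lambda>\<omega>. s < f \<omega> n)"
    by measurable
  ultimately show ?thesis
    unfolding left_gap_exceeds_def by (rule pred_intros_logic(3)[rotated])
qed

lemma sets_left_gaps_exceed:
  assumes "1 \<le> m" "m \<le> l"
  shows "{x \<in> space (PiM {1..l} (\<lambda>_. borel)). left_gap_exceeds m s x \<and> left_gap_exceeds l t x}
    \<in> sets (PiM {1..l} (\<lambda>_. borel))"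
proof -
  have "Measurable.pred (PiM {1..l} (\<lambda>_. borel)) (\<lambda>x. left_gap_exceeds m s x \<and> left_gap_exceeds l t x)"
    using assms measurable_left_gap_exceeds[of m l "\<lambda>x. x"] measurable_left_gap_exceeds[of l l "\<lambda>x. x"]
    by (intro pred_intros_logic) auto
  then show ?thesis by (simp add: pred_def)
qed

lemma measurable_pair_compatible[measurable]:
  assumes [measurable]: "f \<in> borel_measurable N" "g \<in> borel_measurable N"
  shows "Measurable.pred N (\<lambda>\<omega>. pair_compatible s t (f \<omega>) (g \<omega>))"
  unfolding pair_compatible_def atLeastLessThan_iff by measurable

lemma measurable_avoids_windows[measurable]:
  assumes [measurable]: "f \<in> borel_measurable N" "g \<in> borel_measurable N" "h \<in> borel_measurable N"
  shows "Measurable.pred N (\<lambda>\<omega>. avoids_windows m s t (f \<omega>) (g \<omega>) j (h \<omega>))"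
  unfolding avoids_windows_def atLeastLessThan_iff by measurable

lemma measurable_window_events:
  assumes "K \<subseteq> J" "fx \<in> borel_measurable (PiM J (\<lambda>_. unif01))" "fy \<in> borel_measurable (PiM J (\<lambda>_. unif01))"
  shows "(\<lambda>w. of_bool (pair_compatible s t (fx w) (fy w)) *
      (\<Prod>j\<in>K. of_bool (avoids_windows m s t (fx w) (fy w) j (w j))) :: ennreal)
    \<in> borel_measurable (PiM J (\<lambda>_. unif01))"
proof (intro borel_measurable_times_ennreal borel_measurable_prod_ennreal)
  note [measurable] = assms(2,3)
  fix j assume "j \<in> K"
  then have [measurable]: "(\<lambda>w. w j) \<in> borel_measurable (PiM J (\<lambda>_. unif01))"
    using assms(1) by (intro measurable_component_unif01) auto
  show "(\<lambda>w. of_bool (avoids_windows m s t (fx w) (fy w) j (w j)) :: ennreal)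
      \<in> borel_measurable (PiM J (\<lambda>_. unif01))"
    by measurable
qed (use assms in measurable)

lemma nn_integral_avoids_windows:
  assumes "0 \<le> s" "0 \<le> t" "s < x" "x \<le> 1" "t < y" "y \<le> 1"
  shows "(\<integral>\<^sup>+ v. of_bool (avoids_windows m s t x y j v) \<partial>unif01)
    = ennreal (if j < m then 1 - windows_length s t x y else 1 - t)"
proof -
  define W where "W = (if j < m then {x - s..<x} else {}) \<union> {y - t..<y}"
  have "emeasure lborel W = ennreal (if j < m then windows_length s t x y else t)"
    using assms emeasure_lborel_Ico_Un[of "x - s" x "y - t" y] by (simp add: W_def windows_length_def)
  then have "emeasure unif01 (- W) = ennreal (if j < m then 1 - windows_length s t x y else 1 - t)"
    using assms windows_length_nonneg[of s t x y]
    by (subst emeasure_unif01_Compl[where a = "if j < m then windows_length s t x y else t"])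
      (auto simp: W_def)
  moreover have "(\<integral>\<^sup>+ v. of_bool (avoids_windows m s t x y j v) \<partial>unif01)
      = (\<integral>\<^sup>+ v. indicator (- W) v \<partial>unif01)"
    by (intro nn_integral_cong) (auto simp: avoids_windows_def W_def indicator_def)
  moreover have "(\<integral>\<^sup>+ v. indicator (- W) v \<partial>unif01) = emeasure unif01 (- W)"
    by (rule nn_integral_indicator) (simp add: W_def)
  ultimately show ?thesis
    by (simp only:)
qed

lemma prod_nn_integral_avoids_windows:
  assumes "1 \<le> m" "m < l" "0 \<le> s" "0 \<le> t" "0 < x" "x \<le> 1" "0 < y" "y \<le> 1"
  shows "of_bool (pair_compatible s t x y) *
      (\<Prod>j\<in>{1..l} - {m, l}. \<integral>\<^sup>+ v. of_bool (avoids_windows m s t x y j v) \<partial>unif01)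
    = ennreal ((1 - t) ^ (l - m - 1)) * ennreal (joint_tail_density m s t x y)"
proof (cases "pair_compatible s t x y")
  case True
  define K where "K = {1..l} - {m, l}"
  define w where "w = windows_length s t x y"
  have "s < x" "t < y" "x < y - t \<or> y \<le> x"
    using True by (auto simp: pair_compatible_def)
  then have "w \<le> 1"
    unfolding w_def using assms by (intro windows_length_le_one) auto
  have "(\<Prod>j\<in>K. \<integral>\<^sup>+ v. of_bool (avoids_windows m s t x y j v) \<partial>unif01)
      = (\<Prod>j\<in>K. ennreal (if j < m then 1 - w else 1 - t))"
    using assms \<open>s < x\<close> \<open>t < y\<close> by (intro prod.cong) (simp_all add: nn_integral_avoids_windows w_def)
  also have "\<dots> = ennreal (\<Prod>j\<in>K. if j < m then 1 - w else 1 - t)"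
    using \<open>w \<le> 1\<close> \<open>t < y\<close> assms by (intro prod_ennreal) auto
  also have "(\<Prod>j\<in>K. if j < m then 1 - w else 1 - t)
      = (\<Prod>j\<in>K \<inter> {j. j < m}. 1 - w) * (\<Prod>j\<in>K \<inter> - {j. j < m}. 1 - t)"
    by (rule prod.If_cases) (simp add: K_def)
  also have "\<dots> = (1 - w) ^ (m - 1) * (1 - t) ^ (l - m - 1)"
  proof -
    have "K \<inter> {j. j < m} = {1..<m}" "K \<inter> - {j. j < m} = {m<..<l}"
      using assms by (auto simp: K_def)
    then show ?thesis by simp
  qed
  finally show ?thesis
    using True \<open>s < x\<close> \<open>t < y\<close> \<open>x < y - t \<or> y \<le> x\<close> \<open>w \<le> 1\<close> assms
    by (simp add: K_def w_def joint_tail_density_def ennreal_mult[symmetric] mult.commute)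
qed (auto simp: pair_compatible_def joint_tail_density_def)

lemma nn_integral_PiM_window_events:
  assumes "1 \<le> m" "m < l" "0 \<le> s" "0 \<le> t"
  defines "K \<equiv> {1..l} - {m, l}"
  shows "(\<integral>\<^sup>+ w. of_bool (pair_compatible s t (w m) (w l)) *
      (\<Prod>j\<in>K. of_bool (avoids_windows m s t (w m) (w l) j (w j))) \<partial>PiM {1..l} (\<lambda>_. unif01))
    = (\<integral>\<^sup>+ y. \<integral>\<^sup>+ x. ennreal ((1 - t) ^ (l - m - 1)) * ennreal (joint_tail_density m s t x y)
      \<partial>unif01 \<partial>unif01)"
proof -
  interpret unif: product_prob_space "\<lambda>_::nat. unif01"
    using prob_space_unif01
    by (simp add: product_prob_space_def product_sigma_finite_def prob_space_imp_sigma_finite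
        product_prob_space_axioms_def)
  have "finite K" "m \<notin> K" "l \<notin> insert m K" and I: "{1..l} = insert l (insert m K)"
    using assms(1,2) unfolding K_def by auto
  define F where "F x y w = of_bool (pair_compatible s t x y) *
      (\<Prod>j\<in>K. of_bool (avoids_windows m s t x y j (w j)) :: ennreal)" for x y w
  have "(\<integral>\<^sup>+ w. of_bool (pair_compatible s t (w m) (w l)) *
      (\<Prod>j\<in>K. of_bool (avoids_windows m s t (w m) (w l) j (w j))) \<partial>PiM {1..l} (\<lambda>_. unif01))
    = (\<integral>\<^sup>+ w. F (w m) (w l) w \<partial>PiM (insert l (insert m K)) (\<lambda>_. unif01))"
    by (simp only: I F_def)
  also have "\<dots> = (\<integral>\<^sup>+ y. \<integral>\<^sup>+ x. \<integral>\<^sup>+ w. F x y w \<partial>PiM K (\<lambda>_. unif01) \<partial>unif01 \<partial>unif01)"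
  proof (rule unif.nn_integral_PiM_insert2)
    show "(\<lambda>w. F (w m) (w l) w) \<in> borel_measurable (PiM (insert l (insert m K)) (\<lambda>_. unif01))"
      unfolding F_def by (rule measurable_window_events) (auto intro: measurable_component_unif01)
    show "(\<lambda>w. F (w m) y w) \<in> borel_measurable (PiM (insert m K) (\<lambda>_. unif01))" for y
      unfolding F_def by (rule measurable_window_events) (auto intro: measurable_component_unif01)
    show "F x y (w(i := z)) = F x y w" if "i \<notin> K" for x y w i z
      using that unfolding F_def by (intro arg_cong2[where f = "(*)"] refl prod.cong) auto
  qed fact+
  also have "\<dots> = (\<integral>\<^sup>+ y. \<integral>\<^sup>+ x. of_bool (pair_compatible s t x y) *
      (\<Prod>j\<in>K. \<integral>\<^sup>+ v. of_bool (avoids_windows m s t x y j v) \<partial>unif01) \<partial>unif01 \<partial>unif01)"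
  proof (intro nn_integral_cong)
    fix x y
    have "(\<lambda>w. F x y w) \<in> borel_measurable (PiM K (\<lambda>_. unif01))"
      unfolding F_def by (rule measurable_window_events) (auto intro: measurable_component_unif01)
    then show "(\<integral>\<^sup>+ w. F x y w \<partial>PiM K (\<lambda>_. unif01)) = of_bool (pair_compatible s t x y) *
        (\<Prod>j\<in>K. \<integral>\<^sup>+ v. of_bool (avoids_windows m s t x y j v) \<partial>unif01)"
      using unif.product_nn_integral_prod[OF \<open>finite K\<close>, of "\<lambda>j v. of_bool (avoids_windows m s t x y j v)"]
      by (simp add: F_def nn_integral_cmult)
  qed
  also have "\<dots> = (\<integral>\<^sup>+ y. \<integral>\<^sup>+ x. ennreal ((1 - t) ^ (l - m - 1)) * ennreal (joint_tail_density m s t x y)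
      \<partial>unif01 \<partial>unif01)"
  proof (intro nn_integral_cong_AE)
    have unif: "AE x in unif01. 0 < x \<and> x \<le> 1"
      by (rule AE_uniform_measureI) auto
    then show "AE y in unif01. (\<integral>\<^sup>+ x. of_bool (pair_compatible s t x y) *
        (\<Prod>j\<in>K. \<integral>\<^sup>+ v. of_bool (avoids_windows m s t x y j v) \<partial>unif01) \<partial>unif01)
      = (\<integral>\<^sup>+ x. ennreal ((1 - t) ^ (l - m - 1)) * ennreal (joint_tail_density m s t x y) \<partial>unif01)"
    proof eventually_elim
      case (elim y)
      from unif show ?case
      proof (intro nn_integral_cong_AE, eventually_elim)
        case (elim x)
        then show ?case
          unfolding K_def using \<open>0 < y \<and> y \<le> 1\<close> assms
          by (intro prod_nn_integral_avoids_windows) auto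
      qed
    qed
  qed
  finally show ?thesis .
qed

lemma emeasure_PiM_left_gaps_exceed:
  assumes "1 \<le> m" "m < l" "0 \<le> s" "0 \<le> t"
  shows "emeasure (PiM {1..l} (\<lambda>_. unif01))
      {x \<in> space (PiM {1..l} (\<lambda>_. unif01)). left_gap_exceeds m s x \<and> left_gap_exceeds l t x}
    = joint_tail m (l - m - 1) s t"
proof -
  have "{x \<in> space (PiM {1..l} (\<lambda>_. unif01)). left_gap_exceeds m s x \<and> left_gap_exceeds l t x}
      \<in> sets (PiM {1..l} (\<lambda>_. unif01))"
    using sets_left_gaps_exceed[of m l s t] assms
    by (simp add: space_PiM sets_PiM_cong[of _ _ "\<lambda>_. unif01" "\<lambda>_. borel"])
  then have "emeasure (PiM {1..l} (\<lambda>_. unif01))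
      {x \<in> space (PiM {1..l} (\<lambda>_. unif01)). left_gap_exceeds m s x \<and> left_gap_exceeds l t x}
    = (\<integral>\<^sup>+ w. of_bool (pair_compatible s t (w m) (w l)) * (\<Prod>j\<in>{1..l} - {m, l}.
        of_bool (avoids_windows m s t (w m) (w l) j (w j))) \<partial>PiM {1..l} (\<lambda>_. unif01))"
    using assms by (auto simp: nn_integral_indicator[symmetric] left_gaps_exceed_iff prod_of_bool
        indicator_def intro!: nn_integral_cong)
  also have "\<dots> = (\<integral>\<^sup>+ y. \<integral>\<^sup>+ x. ennreal ((1 - t) ^ (l - m - 1)) * ennreal (joint_tail_density m s t x y)
      \<partial>unif01 \<partial>unif01)"
    using assms by (rule nn_integral_PiM_window_events)
  also have "\<dots> = joint_tail m (l - m - 1) s t"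
  proof -
    have "(\<integral>\<^sup>+ x. ennreal (joint_tail_density m s t x y) \<partial>unif01)
        = (\<integral>\<^sup>+ x. ennreal (joint_tail_density m s t x y) \<partial>lborel)" for y
      using assms by (intro nn_integral_unif01) (measurable, auto simp: joint_tail_density_def)
    moreover have "(\<integral>\<^sup>+ y. \<integral>\<^sup>+ x. ennreal (joint_tail_density m s t x y) \<partial>lborel \<partial>unif01)
        = (\<integral>\<^sup>+ y. \<integral>\<^sup>+ x. ennreal (joint_tail_density m s t x y) \<partial>lborel \<partial>lborel)"
      using assms by (intro nn_integral_unif01) (measurable, auto simp: joint_tail_density_def)
    ultimately show ?thesis
      by (simp add: nn_integral_cmult joint_tail_def)
  qed
  finally show ?thesis .
qed

section \<open>Gaps of independent uniform points\<close>

lemma borel_measurable_gapZ: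
  assumes "\<And>j. X j \<in> borel_measurable M"
  shows "gapZ X n \<in> borel_measurable M"
proof -
  \<comment> \<open>split according to the finitely many possible index sets of the maximum\<close>
  have Max_eq: "Max {X j \<omega> | j. j < n \<and> X j \<omega> < X n \<omega>} = (\<Sum>S\<in>Pow {..<n}.
      indicator {\<omega>. \<forall>j\<in>{..<n}. (X j \<omega> < X n \<omega>) = (j \<in> S)} \<omega> * Max ((\<lambda>j. X j \<omega>) ` S))" for \<omega>
  proof -
    let ?S = "{j. j < n \<and> X j \<omega> < X n \<omega>}"
    have "(\<Sum>S\<in>Pow {..<n}. indicator {\<omega>. \<forall>j\<in>{..<n}. (X j \<omega> < X n \<omega>) = (j \<in> S)} \<omega> * Max ((\<lambda>j. X j \<omega>) ` S))
        = (\<Sum>S\<in>Pow {..<n}. if S = ?S then Max ((\<lambda>j. X j \<omega>) ` S) else 0)"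
      by (rule sum.cong) (auto simp: indicator_def)
    also have "\<dots> = Max ((\<lambda>j. X j \<omega>) ` ?S)"
      by (subst sum.delta) auto
    also have "(\<lambda>j. X j \<omega>) ` ?S = {X j \<omega> | j. j < n \<and> X j \<omega> < X n \<omega>}"
      by auto
    finally show ?thesis by simp
  qed
  have [measurable]: "X j \<in> borel_measurable M" for j
    by (fact assms)
  have [measurable]: "Measurable.pred M (\<lambda>\<omega>. \<forall>j\<in>{..<n}. (X j \<omega> < X n \<omega>) = (j \<in> S))" for S
    by (intro pred_intros_finite(3)) measurable
  have [measurable]: "(\<lambda>\<omega>. Max ((\<lambda>j. X j \<omega>) ` S)) \<in> borel_measurable M" if "S \<in> Pow {..<n}" for S
    using that by (intro borel_measurable_Max) (auto intro: finite_subset)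
  show ?thesis
    unfolding gapZ_def[abs_def] Max_eq
    by (intro borel_measurable_diff borel_measurable_sum borel_measurable_times) (auto simp del: Pow_iff)
qed

lemma gapZ_pos_le:
  assumes "0 < n" "X 0 \<omega> = 0" "0 < X n \<omega>"
  shows "0 < gapZ X n \<omega>" "gapZ X n \<omega> \<le> X n \<omega>"
proof -
  let ?S = "{X j \<omega> | j. j < n \<and> X j \<omega> < X n \<omega>}"
  have "finite ?S" by simp
  have "0 \<in> ?S" using assms by (auto intro!: exI[of _ 0])
  then have "?S \<noteq> {}" by auto
  have "Max ?S < X n \<omega>"
    using \<open>finite ?S\<close> \<open>?S \<noteq> {}\<close> by (subst Max_less_iff) auto
  moreover have "0 \<le> Max ?S"
    using \<open>finite ?S\<close> \<open>0 \<in> ?S\<close> by (rule Max_ge)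
  ultimately show "0 < gapZ X n \<omega>" "gapZ X n \<omega> \<le> X n \<omega>"
    by (auto simp: gapZ_def)
qed

lemma less_gapZ_iff:
  assumes "0 < n" "X 0 \<omega> = 0" "0 < X n \<omega>" "0 \<le> s"
  shows "s < gapZ X n \<omega> \<longleftrightarrow> left_gap_exceeds n s (\<lambda>i. X i \<omega>)"
proof -
  let ?S = "{X j \<omega> | j. j < n \<and> X j \<omega> < X n \<omega>}"
  have "finite ?S" by simp
  have "0 \<in> ?S" using assms by (auto intro!: exI[of _ 0])
  then have "?S \<noteq> {}" by auto
  have "s < gapZ X n \<omega> \<longleftrightarrow> Max ?S < X n \<omega> - s"
    by (auto simp: gapZ_def)
  also have "\<dots> \<longleftrightarrow> (\<forall>a\<in>?S. a < X n \<omega> - s)"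
    using \<open>finite ?S\<close> \<open>?S \<noteq> {}\<close> by (rule Max_less_iff)
  also have "\<dots> \<longleftrightarrow> left_gap_exceeds n s (\<lambda>i. X i \<omega>)"
  proof
    assume "\<forall>a\<in>?S. a < X n \<omega> - s"
    then show "left_gap_exceeds n s (\<lambda>i. X i \<omega>)"
      using assms by (fastforce simp: left_gap_exceeds_def)
  next
    assume gap: "left_gap_exceeds n s (\<lambda>i. X i \<omega>)"
    show "\<forall>a\<in>?S. a < X n \<omega> - s"
    proof safe
      fix j assume j: "j < n" "X j \<omega> < X n \<omega>"
      show "X j \<omega> < X n \<omega> - s"
      proof (cases "j = 0")
        case True
        then show ?thesis using gap assms by (simp add: left_gap_exceeds_def)
      next
        case False
        then show ?thesis using gap j by (force simp: left_gap_exceeds_def)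
      qed
    qed
  qed
  finally show ?thesis .
qed

lemma left_gap_exceeds_restrict:
  "1 \<le> n \<Longrightarrow> n \<le> l \<Longrightarrow> left_gap_exceeds n s (restrict x {1..l}) = left_gap_exceeds n s x"
  by (auto simp: left_gap_exceeds_def)

locale uniform_points = prob_space M for M :: "'a measure" and X :: "nat \<Rightarrow> 'a \<Rightarrow> real" +
  assumes X_zero: "\<And>\<omega>. X 0 \<omega> = 0"
    and X_measurable: "\<And>i. 1 \<le> i \<Longrightarrow> X i \<in> borel_measurable M"
    and X_distr: "\<And>i. 1 \<le> i \<Longrightarrow> distr M borel (X i) = uniform_measure lborel {0<..1}"
    and X_indep: "indep_vars (\<lambda>_. borel) X {1..}"
begin

lemma measurable_X[measurable]: "X i \<in> borel_measurable M"
proof (cases "i = 0")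
  case True
  then have "X i = (\<lambda>_. 0)" using X_zero by auto
  then show ?thesis by simp
qed (use X_measurable in auto)

lemma measurable_gapZ[measurable]: "gapZ X n \<in> borel_measurable M"
  by (rule borel_measurable_gapZ) simp

lemma AE_X_in_unit: "AE \<omega> in M. \<forall>i. 1 \<le> i \<longrightarrow> 0 < X i \<omega> \<and> X i \<omega> \<le> 1"
proof (subst AE_all_countable, intro allI)
  fix i :: nat
  show "AE \<omega> in M. 1 \<le> i \<longrightarrow> 0 < X i \<omega> \<and> X i \<omega> \<le> 1"
  proof (cases "1 \<le> i")
    case True
    have "AE x in distr M borel (X i). 0 < x \<and> x \<le> 1"
      unfolding X_distr[OF True] by (rule AE_uniform_measureI) auto
    then show ?thesis by (auto dest: AE_distrD[rotated])
  qed simp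
qed

lemma AE_gapZ_pos_le: "1 \<le> n \<Longrightarrow> AE \<omega> in M. 0 < gapZ X n \<omega> \<and> gapZ X n \<omega> \<le> 1"
  using AE_X_in_unit by eventually_elim (use X_zero gapZ_pos_le[of n X] in force)

lemma distr_restrict_X:
  assumes "1 \<le> l"
  shows "distr M (PiM {1..l} (\<lambda>_. borel)) (\<lambda>\<omega>. \<lambda>i\<in>{1..l}. X i \<omega>) = PiM {1..l} (\<lambda>_. unif01)"
proof -
  have "indep_vars (\<lambda>_. borel) X {1..l}"
    using X_indep by (rule indep_vars_subset) auto
  then have "distr M (PiM {1..l} (\<lambda>_. borel)) (\<lambda>\<omega>. \<lambda>i\<in>{1..l}. X i \<omega>) = PiM {1..l} (\<lambda>i. distr M borel (X i))"
    using assms by (subst (asm) indep_vars_iff_distr_eq_PiM') auto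
  also have "\<dots> = PiM {1..l} (\<lambda>_. unif01)"
    by (rule PiM_cong) (auto simp: X_distr)
  finally show ?thesis .
qed

lemma emeasure_gaps_exceed:
  assumes "1 \<le> m" "m < l" "0 \<le> s" "0 \<le> t"
  shows "emeasure M {\<omega> \<in> space M. s < gapZ X m \<omega> \<and> t < gapZ X l \<omega>} = joint_tail m (l - m - 1) s t"
proof -
  define Xr where "Xr \<omega> = (\<lambda>i\<in>{1..l}. X i \<omega>)" for \<omega>
  define B where "B = {x \<in> space (PiM {1..l} (\<lambda>_. borel)). left_gap_exceeds m s x \<and> left_gap_exceeds l t x}"
  have Xr_measurable: "Xr \<in> M \<rightarrow>\<^sub>M PiM {1..l} (\<lambda>_. borel)"
    unfolding Xr_def by measurable
  have B_sets: "B \<in> sets (PiM {1..l} (\<lambda>_. borel))"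
    unfolding B_def using assms by (intro sets_left_gaps_exceed) auto
  have "emeasure M {\<omega> \<in> space M. s < gapZ X m \<omega> \<and> t < gapZ X l \<omega>} = emeasure M (Xr -` B \<inter> space M)"
  proof (rule emeasure_eq_AE)
    show "AE \<omega> in M. \<omega> \<in> {\<omega> \<in> space M. s < gapZ X m \<omega> \<and> t < gapZ X l \<omega>} \<longleftrightarrow> \<omega> \<in> Xr -` B \<inter> space M"
      using AE_X_in_unit
    proof eventually_elim
      case (elim \<omega>)
      moreover have "Xr \<omega> \<in> space (PiM {1..l} (\<lambda>_. borel))" if "\<omega> \<in> space M"
        using measurable_space[OF Xr_measurable that] .
      ultimately show ?case
        using assms X_zero left_gap_exceeds_restrict[of m l s "\<lambda>i. X i \<omega>"]
          left_gap_exceeds_restrict[of l l t "\<lambda>i. X i \<omega>"]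
        by (auto simp: B_def Xr_def less_gapZ_iff)
    qed
  qed (use Xr_measurable B_sets in auto)
  also have "\<dots> = emeasure (distr M (PiM {1..l} (\<lambda>_. borel)) Xr) B"
    using Xr_measurable B_sets by (rule emeasure_distr[symmetric])
  also have "\<dots> = emeasure (PiM {1..l} (\<lambda>_. unif01))
      {x \<in> space (PiM {1..l} (\<lambda>_. unif01)). left_gap_exceeds m s x \<and> left_gap_exceeds l t x}"
  proof -
    have "distr M (PiM {1..l} (\<lambda>_. borel)) Xr = PiM {1..l} (\<lambda>_. unif01)"
      unfolding Xr_def[abs_def] using assms by (intro distr_restrict_X) auto
    then show ?thesis by (simp add: B_def space_PiM)
  qed
  also have "\<dots> = joint_tail m (l - m - 1) s t"
    using assms by (rule emeasure_PiM_left_gaps_exceed)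
  finally show ?thesis .
qed

lemma nn_integral_gapZ:
  assumes "1 \<le> n"
  shows "(\<integral>\<^sup>+ \<omega>. ennreal (gapZ X n \<omega>) \<partial>M) = ennreal (1 / (real n + 1))"
proof -
  have "(\<integral>\<^sup>+ \<omega>. ennreal (gapZ X n \<omega>) \<partial>M)
      = (\<integral>\<^sup>+ s. indicator {0..} s * emeasure M {\<omega> \<in> space M. s < gapZ X n \<omega>} \<partial>lborel)"
    by (rule nn_integral_eq_tail_integral) measurable
  also have "\<dots> = (\<integral>\<^sup>+ s. indicator {0..} s * joint_tail n 0 s 0 \<partial>lborel)"
  proof (intro nn_integral_cong)
    fix s :: real
    \<comment> \<open>the gap of the next point is positive almost surely, so it may be added to the event\<close>
    have "emeasure M {\<omega> \<in> space M. s < gapZ X n \<omega>}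
        = emeasure M {\<omega> \<in> space M. s < gapZ X n \<omega> \<and> 0 < gapZ X (n + 1) \<omega>}"
      using AE_gapZ_pos_le[of "n + 1"] by (intro emeasure_eq_AE) auto
    then show "indicator {0..} s * emeasure M {\<omega> \<in> space M. s < gapZ X n \<omega>}
        = indicator {0..} s * joint_tail n 0 s 0"
      using emeasure_gaps_exceed[of n "n + 1" s 0] assms by (cases "0 \<le> s") simp_all
  qed
  also have "\<dots> = ennreal (1 / (real n + 1))"
    using nn_integral_joint_tail_zero_right[OF assms, of 0] by simp
  finally show ?thesis .
qed

lemma nn_integral_gapZ_mult:
  assumes "1 \<le> m" "m < l"
  shows "(\<integral>\<^sup>+ \<omega>. ennreal (gapZ X m \<omega> * gapZ X l \<omega>) \<partial>M)
    = ennreal (1 / ((real m + 1) * (real l + 1)))"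
proof -
  have "(\<integral>\<^sup>+ \<omega>. ennreal (gapZ X m \<omega> * gapZ X l \<omega>) \<partial>M)
      = (\<integral>\<^sup>+ \<omega>. ennreal (gapZ X m \<omega>) * ennreal (gapZ X l \<omega>) \<partial>M)"
    using AE_gapZ_pos_le[of m] AE_gapZ_pos_le[of l] assms
    by (intro nn_integral_cong_AE) (auto elim!: eventually_elim2 simp: ennreal_mult)
  also have "\<dots> = (\<integral>\<^sup>+ s. \<integral>\<^sup>+ t. indicator {0..} s * indicator {0..} t *
      emeasure M {\<omega> \<in> space M. s < gapZ X m \<omega> \<and> t < gapZ X l \<omega>} \<partial>lborel \<partial>lborel)"
    by (rule nn_integral_mult_eq_joint_tail_integral) measurable
  also have "\<dots> = (\<integral>\<^sup>+ s. \<integral>\<^sup>+ t. indicator {0..} s * indicator {0..} t *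
      joint_tail m (l - m - 1) s t \<partial>lborel \<partial>lborel)"
    using assms by (intro nn_integral_cong) (auto simp: emeasure_gaps_exceed indicator_def)
  also have "\<dots> = ennreal (1 / ((real m + 1) * (real l + 1)))"
    using nn_integral_joint_tail[OF assms(1), of "l - m - 1"] assms by (simp add: of_nat_diff algebra_simps)
  finally show ?thesis .
qed

lemma expectation_gapZ: "1 \<le> n \<Longrightarrow> expectation (gapZ X n) = 1 / (real n + 1)"
  using AE_gapZ_pos_le[of n] nn_integral_gapZ[of n]
  by (subst integral_eq_nn_integral) (auto elim!: eventually_mono)

lemma expectation_gapZ_mult:
  "1 \<le> m \<Longrightarrow> m < l \<Longrightarrow>
    expectation (\<lambda>\<omega>. gapZ X m \<omega> * gapZ X l \<omega>) = 1 / ((real m + 1) * (real l + 1))"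
  using AE_gapZ_pos_le[of m] AE_gapZ_pos_le[of l] nn_integral_gapZ_mult[of m l]
  by (subst integral_eq_nn_integral) (auto elim!: eventually_elim2)

lemma integrable_gapZ: "1 \<le> n \<Longrightarrow> integrable M (gapZ X n)"
proof (rule integrable_const_bound[where B = 1])
  show "AE \<omega> in M. norm (gapZ X n \<omega>) \<le> 1" if "1 \<le> n"
    using AE_gapZ_pos_le[OF that] by eventually_elim auto
qed simp

lemma integrable_gapZ_mult: "1 \<le> m \<Longrightarrow> 1 \<le> l \<Longrightarrow> integrable M (\<lambda>\<omega>. gapZ X m \<omega> * gapZ X l \<omega>)"
proof (rule integrable_const_bound[where B = 1])
  show "AE \<omega> in M. norm (gapZ X m \<omega> * gapZ X l \<omega>) \<le> 1" if "1 \<le> m" "1 \<le> l"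
    using AE_gapZ_pos_le[OF that(1)] AE_gapZ_pos_le[OF that(2)]
    by eventually_elim (auto simp: abs_mult intro: mult_le_one)
qed simp

lemma covariance_gapZ: "1 \<le> m \<Longrightarrow> m < l \<Longrightarrow> covariance M (gapZ X m) (gapZ X l) = 0"
  by (simp add: covariance_eq integrable_gapZ integrable_gapZ_mult expectation_gapZ expectation_gapZ_mult)

end

theorem lemma5:
  fixes M :: "'a measure" and X :: "nat \<Rightarrow> 'a \<Rightarrow> real" and m l :: nat
  assumes "prob_space M"
    and "\<And>\<omega>. X 0 \<omega> = 0"
    and "\<And>i. i \<ge> 1 \<Longrightarrow> X i \<in> borel_measurable M"
    and "\<And>i. i \<ge> 1 \<Longrightarrow> distr M borel (X i) = uniform_measure lborel {0<..1}"
    and "prob_space.indep_vars M (\<lambda>_. borel) X {1..}"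
    and "1 \<le> m" and "m < l"
  shows "covariance M (gapZ X m) (gapZ X l) = 0"
proof -
  interpret uniform_points M X
    using assms(1-5) by (intro uniform_points.intro uniform_points_axioms.intro) auto
  show ?thesis
    using assms(6,7) by (rule covariance_gapZ)
qed

end
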